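(* Let $d\geq 1$. For every nonzero $p\in P_{d,2}$, \[ \frac{\|p\|_\infty}{\|p\|_B}\;\geq\;\frac{\|\mathrm{Ch}_{d,2}\|_\infty}{\|\mathrm{Ch}_{d,2}\|_B}\;=\;\frac{1}{\sqrt{2^{d-1}}}. \] Moreover: \begin{itemize} \item when $d=1$, equality holds for every nonzero $p\in P_{1,2}$; \item when $d=2$, equality holds if and only if $p=\pm g^*(x_1^2+x_2^2)$ or $p=g^*(x_1^2-x_2^2)$ for some $g\in CO(2)$; \item when $d\geq 3$, equality holds if and only if $p=g^*\mathrm{Ch}_{d,2}$ for some $g\in CO(2)$. \end{itemize}
   Context: $P_{d,n}$ denotes the real vector space of homogeneous polynomials (forms) of degree $d$ in $n$ real variables. For $p\in P_{d,n}$, the uniform norm is $\|p\|_\infty=\max_{\|x\|=1}|p(x)|$, where $\|\cdot\|$ is the Euclidean norm on $\mathbb{R}^n$. Writing $p(x)=\sum_{|\alpha|=d}c_\alpha x^\alpha$ in the monomial basis, the Bombieri norm is \[ \|p\|_B=\Big(\sum_{|\alpha|=d}\binom{d}{\alpha}^{-1}|c_\alpha|^2\Big)^{1/2},\qquad \binom{d}{\alpha}=\frac{d!}{\alpha_1!\cdots\alpha_n!}. \] The conformal orthogonal group is $CO(n)=\mathbb{R}_{>0}\times O(n)$. It acts on $P_{d,n}$ by $(g^*p)(x)=s\,p(\rho^{-1}x)$ for $g=(s,\rho)$. The binary Chebyshev form of degree $d$ is \[ \mathrm{Ch}_{d,2}(x_1,x_2)=\frac{(x_1+ix_2)^d+(x_1-ix_2)^d}{2}=\sum_{k=0}^{\lfloor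 d/2\rfloor}\binom{d}{2k}(-1)^kx_1^{d-2k}x_2^{2k}. \] *)

theory Defs
  imports "HOL-Analysis.Analysis"
begin

text \<open>A binary form p of degree d in P_{d,2} is given by its coefficient vector
  c_0,...,c_d in the monomial basis: p(x) = sum_{k=0..d} c_k x1^(d-k) x2^k.
  Coefficients c k for k > d are ignored.\<close>

definition form_eval :: "nat \<Rightarrow> (nat \<Rightarrow> real) \<Rightarrow> real^2 \<Rightarrow> real" where
  "form_eval d c x = (\<Sum>k\<le>d. c k * (x$1)^(d-k) * (x$2)^k)"

definition nonzero_form :: "nat \<Rightarrow> (nat \<Rightarrow> real) \<Rightarrow> bool" where
  "nonzero_form d c \<longleftrightarrow> (\<exists>k\<le>d. c k \<noteq> 0)"

definition uniform_norm :: "(real^2 \<Rightarrow> real) \<Rightarrow> real" where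
  "uniform_norm p = Sup {\<bar>p x\<bar> | x. norm x = 1}"

text \<open>Bombieri norm; for alpha = (d-k,k) the multinomial coefficient is d choose k.\<close>
definition bombieri_norm :: "nat \<Rightarrow> (nat \<Rightarrow> real) \<Rightarrow> real" where
  "bombieri_norm d c = sqrt (\<Sum>k\<le>d. (c k)^2 / real (d choose k))"

definition cheb_coeff :: "nat \<Rightarrow> nat \<Rightarrow> real" where
  "cheb_coeff d k = (if even k then real (d choose k) * (-1)^(k div 2) else 0)"

definition co_action :: "real \<Rightarrow> (real^2 \<Rightarrow> real^2) \<Rightarrow> (real^2 \<Rightarrow> real) \<Rightarrow> real^2 \<Rightarrow> real" where
  "co_action s \<rho> p = (\<lambda>x. s * p (inv \<rho> x))"

definition in_CO2 :: "real \<Rightarrow> (real^2 \<Rightarrow> real^2) \<Rightarrow> bool" where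
  "in_CO2 s \<rho> \<longleftrightarrow> s > 0 \<and> orthogonal_transformation \<rho>"

definition ratio :: "nat \<Rightarrow> (nat \<Rightarrow> real) \<Rightarrow> real" where
  "ratio d c = uniform_norm (form_eval d c) / bombieri_norm d c"

end

theory Submission
  imports Defs "HOL-Computational_Algebra.Polynomial"
begin

text \<open>Write z = x1 + i x2. A real binary form of degree d is p = sum_j a_j z^j conj(z)^(d-j)
  with a_(d-j) = conj(a_j), and these monomials are orthogonal for the Bombieri inner product, with
  squared norm 2^d / (d choose j); hence |p|_B^2 = 2^d sum_j |a_j|^2 / (d choose j).
  Averaging p^2 over d points of the unit circle spaced by pi/d kills every cross term except those
  of a_0 and a_d, and rotating so that their phase is aligned gives
  |p|_oo^2 >= sum_j |a_j|^2 + 2 |a_d|^2. Since (d choose j) >= 2 for 0 < j < d, this yields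
  2^(d-1) |p|_oo^2 >= |p|_B^2. For d >= 3 equality forces every middle a_j to vanish, so
  p = Re (W z^d), a rotated and scaled Chebyshev form. For d = 2 the middle coefficient escapes this
  argument; evaluating p = a_1 + 2 Re (a_2 z^2) on the circle shows that a_1 or a_2 must vanish.\<close>

lemma norm_vec2: "norm (x::real^2) = sqrt ((x$1)^2 + (x$2)^2)"
  by (simp add: norm_vec_def L2_set_def sum_2)

lemma sum_atMost_2: "(\<Sum>j\<le>2. g j) = g 0 + g 1 + g (2::nat)" for g :: "nat \<Rightarrow> 'a::comm_monoid_add"
  by (simp add: numeral_2_eq_2)

lemma polyfun_eq_coeffs_except:
  fixes c e :: "nat \<Rightarrow> 'a::{idom,ring_char_0}"
  assumes "\<And>x. x \<noteq> a \<Longrightarrow> (\<Sum>i\<le>n. c i * x^i) = (\<Sum>i\<le>n. e i * x^i)"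
  shows "\<forall>i\<le>n. c i = e i"
proof -
  define p where "p = (\<Sum>i\<le>n. monom (c i - e i) i)"
  have eval: "poly p x = (\<Sum>i\<le>n. c i * x^i) - (\<Sum>i\<le>n. e i * x^i)" for x
    by (simp add: p_def poly_sum poly_monom sum_subtractf algebra_simps)
  have "p = 0"
  proof (rule ccontr)
    assume "p \<noteq> 0"
    hence "finite {x. poly p x = 0}" by (rule poly_roots_finite)
    moreover have "UNIV - {a} \<subseteq> {x. poly p x = 0}" using assms eval by auto
    ultimately have "finite (UNIV - {a} :: 'a set)" by (rule rev_finite_subset)
    thus False by (simp add: infinite_UNIV_char_0)
  qed
  have "coeff p i = (if i \<le> n then c i - e i else 0)" for i
    by (simp add: p_def coeff_sum coeff_monom)
  with \<open>p = 0\<close> show ?thesis by (metis coeff_0 eq_iff_diff_eq_0)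
qed

lemma polyfun_coeff_eq:
  fixes c e :: "nat \<Rightarrow> 'a::{idom,ring_char_0}"
  assumes "\<And>x. (\<Sum>i\<le>n. c i * x^i) = (\<Sum>i\<le>n. e i * x^i)" and "k \<le> n"
  shows "c k = e k"
  using polyfun_eq_coeffs_except[where a=0 and n=n and c=c and e=e] assms by blast

lemma poly_eq_sum_coeffs:
  fixes p :: "'a::comm_semiring_1 poly"
  assumes "degree p \<le> n"
  shows "poly p x = (\<Sum>i\<le>n. coeff p i * x^i)"
proof -
  have "poly p x = poly (\<Sum>i\<le>n. monom (coeff p i) i) x"
    using poly_as_sum_of_monoms'[OF assms] by simp
  also have "\<dots> = (\<Sum>i\<le>n. coeff p i * x^i)" by (simp add: poly_sum poly_monom)
  finally show ?thesis .
qed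

lemma form_eval_eq_imp_coeffs_eq:
  assumes "\<And>x. form_eval d c x = form_eval d c' x"
  shows "\<forall>k\<le>d. c k = c' k"
proof -
  have "(\<Sum>k\<le>d. c k * t^k) = (\<Sum>k\<le>d. c' k * t^k)" for t :: real
    using assms[of "vector [1, t]"] by (simp add: form_eval_def)
  thus ?thesis using polyfun_eq_coeffs[where 'a=real] by blast
qed

subsection \<open>The Bombieri inner product\<close>

definition bombieri_inner :: "nat \<Rightarrow> (nat \<Rightarrow> complex) \<Rightarrow> (nat \<Rightarrow> complex) \<Rightarrow> complex" where
  "bombieri_inner d u v = (\<Sum>k\<le>d. u k * cnj (v k) / of_nat (d choose k))"

lemma bombieri_inner_cong:
  "(\<And>k. k \<le> d \<Longrightarrow> u k = u' k) \<Longrightarrow> (\<And>k. k \<le> d \<Longrightarrow> v k = v' k) \<Longrightarrow>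
    bombieri_inner d u v = bombieri_inner d u' v'"
  unfolding bombieri_inner_def by (intro sum.cong) auto

lemma bombieri_inner_sum_left:
  "bombieri_inner d (\<lambda>k. \<Sum>j\<le>n. a j * u j k) v = (\<Sum>j\<le>n. a j * bombieri_inner d (u j) v)"
proof -
  have "bombieri_inner d (\<lambda>k. \<Sum>j\<le>n. a j * u j k) v
      = (\<Sum>k\<le>d. \<Sum>j\<le>n. a j * (u j k * cnj (v k) / of_nat (d choose k)))"
    unfolding bombieri_inner_def
    by (simp add: sum_distrib_right sum_distrib_left sum_divide_distrib mult_ac)
  also have "\<dots> = (\<Sum>j\<le>n. \<Sum>k\<le>d. a j * (u j k * cnj (v k) / of_nat (d choose k)))"
    by (rule sum.swap)
  also have "\<dots> = (\<Sum>j\<le>n. a j * bombieri_inner d (u j) v)"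
    unfolding bombieri_inner_def by (simp add: sum_distrib_left)
  finally show ?thesis .
qed

lemma bombieri_inner_cnj_swap: "bombieri_inner d v u = cnj (bombieri_inner d u v)"
  unfolding bombieri_inner_def by (simp add: cnj_sum mult.commute)

lemma bombieri_inner_sum_sum:
  "bombieri_inner d (\<lambda>k. \<Sum>j\<le>n. a j * u j k) (\<lambda>k. \<Sum>l\<le>m. b l * v l k)
   = (\<Sum>j\<le>n. \<Sum>l\<le>m. a j * cnj (b l) * bombieri_inner d (u j) (v l))"
proof -
  have right: "bombieri_inner d w (\<lambda>k. \<Sum>l\<le>m. b l * v l k)
      = (\<Sum>l\<le>m. cnj (b l) * bombieri_inner d w (v l))" for w
    by (subst (1 2) bombieri_inner_cnj_swap) (simp add: bombieri_inner_sum_left cnj_sum)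
  show ?thesis
    by (simp add: bombieri_inner_sum_left right sum_distrib_left mult_ac)
qed

lemma bombieri_inner_linear_powers:
  "bombieri_inner d (\<lambda>k. of_nat (d choose k) * a^(d-k) * b^k) (\<lambda>k. of_nat (d choose k) * c^(d-k) * e^k)
   = (a * cnj c + b * cnj e)^d"
proof -
  have "(a * cnj c + b * cnj e)^d = (b * cnj e + a * cnj c)^d" by (simp add: add.commute)
  also have "\<dots> = (\<Sum>k\<le>d. of_nat (d choose k) * (b * cnj e)^k * (a * cnj c)^(d-k))"
    by (simp add: binomial_ring atLeast0AtMost)
  also have "\<dots> = bombieri_inner d (\<lambda>k. of_nat (d choose k) * a^(d-k) * b^k)
      (\<lambda>k. of_nat (d choose k) * c^(d-k) * e^k)"
    unfolding bombieri_inner_def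
    by (intro sum.cong refl) (simp add: power_mult_distrib field_simps)
  finally show ?thesis by simp
qed

subsection \<open>The monomials z^j conj(z)^(d-j)\<close>

text \<open>With z = x1 + i x2 and dehomogenised at x1 = 1, the monomial z^j conj(z)^(d-j) becomes
  (1 + i y)^j (1 - i y)^(d-j); its coefficients are those of x1^(d-k) x2^k.\<close>

definition zmon_poly :: "nat \<Rightarrow> nat \<Rightarrow> complex poly" where
  "zmon_poly d j = [:1, \<i>:]^j * [:1, -\<i>:]^(d-j)"

definition zmon_coeff :: "nat \<Rightarrow> nat \<Rightarrow> nat \<Rightarrow> complex" where
  "zmon_coeff d j k = coeff (zmon_poly d j) k"

lemma degree_zmon_poly: "j \<le> d \<Longrightarrow> degree (zmon_poly d j) \<le> d"
proof -
  assume j: "j \<le> d"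
  have "degree (zmon_poly d j) \<le> degree ([:1, \<i>:]^j) + degree ([:1, -\<i>:]^(d-j))"
    unfolding zmon_poly_def by (rule degree_mult_le)
  also have "\<dots> \<le> j * 1 + (d - j) * 1"
    by (intro add_mono order.trans[OF degree_power_le]) auto
  finally show ?thesis using j by simp
qed

lemma zmon_coeff_sum:
  "j \<le> d \<Longrightarrow> (\<Sum>k\<le>d. zmon_coeff d j k * y^k) = (1 + \<i>*y)^j * (1 - \<i>*y)^(d-j)"
  unfolding zmon_coeff_def
  by (subst poly_eq_sum_coeffs[OF degree_zmon_poly, symmetric]) (auto simp: zmon_poly_def algebra_simps)

lemma binomial_zmon_expansion:
  assumes "k \<le> d"
  shows "of_nat (d choose k) * (s+t)^(d-k) * (\<i>*(s-t))^k
    = (\<Sum>j\<le>d. of_nat (d choose j) * s^j * t^(d-j) * zmon_coeff d j k)"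
proof -
  have "(\<Sum>k\<le>d. (of_nat (d choose k) * (s+t)^(d-k) * (\<i>*(s-t))^k) * y^k)
     = (\<Sum>k\<le>d. (\<Sum>j\<le>d. of_nat (d choose j) * s^j * t^(d-j) * zmon_coeff d j k) * y^k)" for y
  proof -
    have "(\<Sum>k\<le>d. (of_nat (d choose k) * (s+t)^(d-k) * (\<i>*(s-t))^k) * y^k)
        = (\<i>*(s-t)*y + (s+t))^d"
      by (simp add: binomial_ring atLeast0AtMost power_mult_distrib mult_ac)
    also have "\<dots> = (s*(1+\<i>*y) + t*(1-\<i>*y))^d" by (simp add: algebra_simps)
    also have "\<dots> = (\<Sum>j\<le>d. of_nat (d choose j) * (s*(1+\<i>*y))^j * (t*(1-\<i>*y))^(d-j))"
      by (simp add: binomial_ring atLeast0AtMost)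
    also have "\<dots> = (\<Sum>j\<le>d. of_nat (d choose j) * s^j * t^(d-j) * (\<Sum>k\<le>d. zmon_coeff d j k * y^k))"
    proof (intro sum.cong refl)
      fix j assume "j \<in> {..d}"
      hence "(\<Sum>k\<le>d. zmon_coeff d j k * y^k) = (1 + \<i>*y)^j * (1 - \<i>*y)^(d-j)"
        by (simp add: zmon_coeff_sum)
      thus "of_nat (d choose j) * (s*(1+\<i>*y))^j * (t*(1-\<i>*y))^(d-j)
          = of_nat (d choose j) * s^j * t^(d-j) * (\<Sum>k\<le>d. zmon_coeff d j k * y^k)"
        unfolding power_mult_distrib by (simp only: mult_ac)
    qed
    also have "\<dots> = (\<Sum>j\<le>d. \<Sum>k\<le>d. of_nat (d choose j) * s^j * t^(d-j) * zmon_coeff d j k * y^k)"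
      by (simp add: sum_distrib_left mult.assoc)
    also have "\<dots> = (\<Sum>k\<le>d. \<Sum>j\<le>d. of_nat (d choose j) * s^j * t^(d-j) * zmon_coeff d j k * y^k)"
      by (rule sum.swap)
    also have "\<dots> = (\<Sum>k\<le>d. (\<Sum>j\<le>d. of_nat (d choose j) * s^j * t^(d-j) * zmon_coeff d j k) * y^k)"
      by (simp add: sum_distrib_right)
    finally show ?thesis .
  qed
  thus ?thesis using assms by (rule polyfun_coeff_eq)
qed

text \<open>Pair the reproducing kernels of (s + 1) x1 + i (s - 1) x2 and (cnj sigma + 1) x1 +
  i (cnj sigma - 1) x2 once directly and once after expanding both in the monomials.\<close>

lemma bombieri_inner_zmon_generating:
  "(\<Sum>j\<le>d. (of_nat (d choose j) * (\<Sum>l\<le>d. of_nat (d choose l) * bombieri_inner d (zmon_coeff d j) (zmon_coeff d l) * \<sigma>^l)) * s^j)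
   = (\<Sum>j\<le>d. (2^d * of_nat (d choose j) * \<sigma>^j) * s^j)"
proof -
  define s' where "s' = cnj \<sigma>"
  define u where "u s k = of_nat (d choose k) * (s+1)^(d-k) * (\<i>*(s-1))^k" for s k
  have "bombieri_inner d (u s) (u s') = ((s+1) * cnj (s'+1) + (\<i>*(s-1)) * cnj (\<i>*(s'-1)))^d"
    unfolding u_def by (rule bombieri_inner_linear_powers)
  also have "\<dots> = (2 * (s * \<sigma>) + 2)^d" by (simp add: s'_def algebra_simps)
  also have "\<dots> = (\<Sum>j\<le>d. (2^d * of_nat (d choose j) * \<sigma>^j) * s^j)"
    by (simp add: binomial_ring atLeast0AtMost power_mult_distrib mult_ac power_add[symmetric])
  finally have direct: "bombieri_inner d (u s) (u s') = (\<Sum>j\<le>d. (2^d * of_nat (d choose j) * \<sigma>^j) * s^j)" .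
  have "bombieri_inner d (u s) (u s')
     = bombieri_inner d (\<lambda>k. \<Sum>j\<le>d. (of_nat (d choose j) * s^j * 1^(d-j)) * zmon_coeff d j k)
         (\<lambda>k. \<Sum>l\<le>d. (of_nat (d choose l) * s'^l * 1^(d-l)) * zmon_coeff d l k)"
    unfolding u_def by (intro bombieri_inner_cong binomial_zmon_expansion[where t=1])
  also have "\<dots> = (\<Sum>j\<le>d. \<Sum>l\<le>d. (of_nat (d choose j) * s^j * 1^(d-j)) * cnj (of_nat (d choose l) * s'^l * 1^(d-l))
      * bombieri_inner d (zmon_coeff d j) (zmon_coeff d l))"
    by (rule bombieri_inner_sum_sum)
  also have "\<dots> = (\<Sum>j\<le>d. (of_nat (d choose j) * (\<Sum>l\<le>d. of_nat (d choose l) * bombieri_inner d (zmon_coeff d j) (zmon_coeff d l) * \<sigma>^l)) * s^j)"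
    by (simp add: s'_def sum_distrib_left sum_distrib_right mult_ac)
  finally show ?thesis using direct by simp
qed

lemma bombieri_inner_zmon:
  assumes "j \<le> d" "l \<le> d"
  shows "bombieri_inner d (zmon_coeff d j) (zmon_coeff d l) = (if j = l then 2^d / of_nat (d choose j) else 0)"
proof -
  have "of_nat (d choose j) * (\<Sum>l\<le>d. of_nat (d choose l) * bombieri_inner d (zmon_coeff d j) (zmon_coeff d l) * \<sigma>^l)
      = 2^d * of_nat (d choose j) * \<sigma>^j" for \<sigma>
    by (rule polyfun_coeff_eq[OF bombieri_inner_zmon_generating[of d \<sigma>] assms(1)])
  hence "(\<Sum>l\<le>d. (of_nat (d choose l) * bombieri_inner d (zmon_coeff d j) (zmon_coeff d l)) * \<sigma>^l)
      = (\<Sum>l\<le>d. (if l = j then 2^d else 0) * \<sigma>^l)" for \<sigma>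
    using assms(1) by (simp add: if_distrib[of "\<lambda>x. x * _"] cong: if_cong)
  hence "of_nat (d choose l) * bombieri_inner d (zmon_coeff d j) (zmon_coeff d l) = (if l = j then 2^d else 0)"
    using assms(2) by (rule polyfun_coeff_eq)
  moreover have "of_nat (d choose l) \<noteq> (0::complex)" using assms(2) by simp
  ultimately show ?thesis by (auto simp: field_simps)
qed

lemma cnj_zmon_coeff:
  assumes "j \<le> d" "k \<le> d"
  shows "cnj (zmon_coeff d j k) = zmon_coeff d (d-j) k"
proof -
  have "(\<Sum>k\<le>d. cnj (zmon_coeff d j k) * y^k) = (\<Sum>k\<le>d. zmon_coeff d (d-j) k * y^k)" for y
  proof -
    have "(\<Sum>k\<le>d. cnj (zmon_coeff d j k) * y^k) = cnj (\<Sum>k\<le>d. zmon_coeff d j k * (cnj y)^k)" by simp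
    also have "\<dots> = (1 + \<i>*y)^(d-j) * (1 - \<i>*y)^(d-(d-j))" using assms(1) by (simp add: zmon_coeff_sum)
    also have "\<dots> = (\<Sum>k\<le>d. zmon_coeff d (d-j) k * y^k)" by (simp add: zmon_coeff_sum)
    finally show ?thesis .
  qed
  thus ?thesis using assms(2) by (rule polyfun_coeff_eq)
qed

lemma zmon_coeff_top: "k \<le> d \<Longrightarrow> zmon_coeff d d k = of_nat (d choose k) * \<i>^k"
proof -
  assume k: "k \<le> d"
  have "(\<Sum>k\<le>d. zmon_coeff d d k * y^k) = (\<Sum>k\<le>d. (of_nat (d choose k) * \<i>^k) * y^k)" for y
  proof -
    have "(\<Sum>k\<le>d. zmon_coeff d d k * y^k) = (\<i>*y + 1)^d" by (simp add: zmon_coeff_sum add.commute)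
    also have "\<dots> = (\<Sum>k\<le>d. (of_nat (d choose k) * \<i>^k) * y^k)"
      by (simp add: binomial_ring atLeast0AtMost power_mult_distrib mult_ac)
    finally show ?thesis .
  qed
  thus ?thesis using k by (rule polyfun_coeff_eq)
qed

subsection \<open>Coordinates of a real form in the monomials z^j conj(z)^(d-j)\<close>

text \<open>Substituting x1 = (z + conj z)/2, x2 = (z - conj z)/(2 i) and dehomogenising at
  conj z = 1 gives a polynomial in u = z whose coefficients are the coordinates a_j.\<close>

definition zcoeff_poly :: "nat \<Rightarrow> (nat \<Rightarrow> real) \<Rightarrow> complex poly" where
  "zcoeff_poly d c = (\<Sum>k\<le>d. smult (complex_of_real (c k)) ([:1/2, 1/2:]^(d-k) * [:\<i>/2, -\<i>/2:]^k))"

definition zcoeff :: "nat \<Rightarrow> (nat \<Rightarrow> real) \<Rightarrow> nat \<Rightarrow> complex" where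
  "zcoeff d c j = coeff (zcoeff_poly d c) j"

lemma degree_zcoeff_poly: "degree (zcoeff_poly d c) \<le> d"
  unfolding zcoeff_poly_def
proof (intro degree_sum_le)
  fix k assume "k \<in> {..d}"
  have "degree (smult (complex_of_real (c k)) ([:1/2, 1/2:]^(d-k) * [:\<i>/2, -\<i>/2:]^k))
      \<le> degree ([:1/2::complex, 1/2:]^(d-k)) + degree ([:\<i>/2, -\<i>/2:]^k)"
    by (rule order.trans[OF degree_smult_le degree_mult_le])
  also have "\<dots> \<le> (d-k) * 1 + k * 1"
    by (intro add_mono order.trans[OF degree_power_le]) auto
  finally show "degree (smult (complex_of_real (c k)) ([:1/2, 1/2:]^(d-k) * [:\<i>/2, -\<i>/2:]^k)) \<le> d"
    using \<open>k \<in> {..d}\<close> by simp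
qed simp

lemma poly_zcoeff_poly:
  "poly (zcoeff_poly d c) u = (\<Sum>k\<le>d. complex_of_real (c k) * ((u+1)/2)^(d-k) * (\<i>*(1-u)/2)^k)"
  unfolding zcoeff_poly_def poly_sum by (intro sum.cong refl) (simp add: field_simps)

lemma poly_zcoeff_poly_eq_sum: "poly (zcoeff_poly d c) u = (\<Sum>j\<le>d. zcoeff d c j * u^j)"
  unfolding zcoeff_def by (rule poly_eq_sum_coeffs[OF degree_zcoeff_poly])

lemma zmon_expansion_at:
  assumes y: "y \<noteq> -\<i>"
  shows "(\<Sum>k\<le>d. complex_of_real (c k) * y^k)
    = (\<Sum>k\<le>d. (\<Sum>j\<le>d. zcoeff d c j * zmon_coeff d j k) * y^k)"
proof -
  define w where "w = 1 - \<i>*y"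
  have w: "w \<noteq> 0"
  proof
    assume "w = 0"
    hence "-\<i> * (\<i> * y) = -\<i>" by (simp add: w_def)
    with y show False by (simp add: mult.assoc[symmetric])
  qed
  define u where "u = (1 + \<i>*y) / w"
  have u1: "(u+1)/2 = 1/w" using w by (simp add: u_def w_def field_simps)
  have u2: "\<i>*(1-u)/2 = y/w" using w by (simp add: u_def w_def field_simps)
  have "(\<Sum>k\<le>d. (\<Sum>j\<le>d. zcoeff d c j * zmon_coeff d j k) * y^k)
      = (\<Sum>k\<le>d. \<Sum>j\<le>d. zcoeff d c j * (zmon_coeff d j k * y^k))"
    by (simp add: sum_distrib_right mult.assoc)
  also have "\<dots> = (\<Sum>j\<le>d. \<Sum>k\<le>d. zcoeff d c j * (zmon_coeff d j k * y^k))"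
    by (rule sum.swap)
  also have "\<dots> = (\<Sum>j\<le>d. zcoeff d c j * ((1 + \<i>*y)^j * (1 - \<i>*y)^(d-j)))"
    by (intro sum.cong refl) (simp add: sum_distrib_left[symmetric] zmon_coeff_sum)
  also have "\<dots> = (\<Sum>j\<le>d. w^d * (zcoeff d c j * u^j))"
  proof (intro sum.cong refl)
    fix j assume "j \<in> {..d}"
    hence "w^d = w^j * w^(d-j)" by (simp add: power_add[symmetric])
    thus "zcoeff d c j * ((1 + \<i>*y)^j * (1 - \<i>*y)^(d-j)) = w^d * (zcoeff d c j * u^j)"
      using w by (simp add: u_def w_def power_divide)
  qed
  also have "\<dots> = w^d * poly (zcoeff_poly d c) u"
    by (simp add: poly_zcoeff_poly_eq_sum sum_distrib_left)
  also have "\<dots> = (\<Sum>k\<le>d. w^d * (complex_of_real (c k) * (1/w)^(d-k) * (y/w)^k))"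
    by (simp add: poly_zcoeff_poly u1 u2 sum_distrib_left)
  also have "\<dots> = (\<Sum>k\<le>d. complex_of_real (c k) * y^k)"
  proof (intro sum.cong refl)
    fix k assume "k \<in> {..d}"
    hence "w^d = w^(d-k) * w^k" by (simp add: power_add[symmetric])
    thus "w^d * (complex_of_real (c k) * (1/w)^(d-k) * (y/w)^k) = complex_of_real (c k) * y^k"
      using w by (simp add: power_divide field_simps)
  qed
  finally show ?thesis by simp
qed

lemma coeff_eq_zmon_expansion:
  "k \<le> d \<Longrightarrow> complex_of_real (c k) = (\<Sum>j\<le>d. zcoeff d c j * zmon_coeff d j k)"
  using polyfun_eq_coeffs_except[where a="-\<i>" and n=d and c="\<lambda>k. complex_of_real (c k)"
      and e="\<lambda>k. \<Sum>j\<le>d. zcoeff d c j * zmon_coeff d j k"] zmon_expansion_at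
  by blast

lemma zmon_expansion_unique:
  assumes "\<And>k. k \<le> d \<Longrightarrow> (\<Sum>j\<le>d. b j * zmon_coeff d j k) = (\<Sum>j\<le>d. b' j * zmon_coeff d j k)"
    and "l \<le> d"
  shows "b l = b' l"
proof -
  have pair: "bombieri_inner d (\<lambda>k. \<Sum>j\<le>d. b j * zmon_coeff d j k) (zmon_coeff d l)
      = b l * (2^d / of_nat (d choose l))" for b
  proof -
    have "bombieri_inner d (\<lambda>k. \<Sum>j\<le>d. b j * zmon_coeff d j k) (zmon_coeff d l)
        = (\<Sum>j\<le>d. b j * bombieri_inner d (zmon_coeff d j) (zmon_coeff d l))"
      by (rule bombieri_inner_sum_left)
    also have "\<dots> = (\<Sum>j\<le>d. if j = l then b j * (2^d / of_nat (d choose l)) else 0)"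
      using assms(2) by (intro sum.cong refl) (simp add: bombieri_inner_zmon)
    also have "\<dots> = b l * (2^d / of_nat (d choose l))" using assms(2) by simp
    finally show ?thesis .
  qed
  have "bombieri_inner d (\<lambda>k. \<Sum>j\<le>d. b j * zmon_coeff d j k) (zmon_coeff d l)
      = bombieri_inner d (\<lambda>k. \<Sum>j\<le>d. b' j * zmon_coeff d j k) (zmon_coeff d l)"
    by (intro bombieri_inner_cong) (auto simp: assms(1))
  hence "b l * (2^d / of_nat (d choose l)) = b' l * (2^d / of_nat (d choose l))" by (simp only: pair)
  moreover have "(2^d / of_nat (d choose l)) \<noteq> (0::complex)" using assms(2) by simp
  ultimately show ?thesis by simp
qed

lemma cnj_zcoeff: assumes "j \<le> d" shows "cnj (zcoeff d c j) = zcoeff d c (d-j)"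
proof -
  have "(\<Sum>j\<le>d. zcoeff d c j * zmon_coeff d j k) = (\<Sum>j\<le>d. cnj (zcoeff d c (d-j)) * zmon_coeff d j k)"
    if k: "k \<le> d" for k
  proof -
    have "(\<Sum>j\<le>d. zcoeff d c j * zmon_coeff d j k) = complex_of_real (c k)"
      using coeff_eq_zmon_expansion[OF k, of c] by simp
    also have "\<dots> = cnj (complex_of_real (c k))" by simp
    also have "\<dots> = (\<Sum>j\<le>d. cnj (zcoeff d c j) * zmon_coeff d (d-j) k)"
      using coeff_eq_zmon_expansion[OF k, of c] k by (simp add: cnj_zmon_coeff)
    also have "\<dots> = (\<Sum>j\<le>d. cnj (zcoeff d c (d-j)) * zmon_coeff d j k)"
      using sum.atLeastAtMost_rev[of "\<lambda>j. cnj (zcoeff d c j) * zmon_coeff d (d-j) k" 0 d]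
      by (simp add: atMost_atLeast0)
    finally show ?thesis .
  qed
  hence "zcoeff d c (d-j) = cnj (zcoeff d c (d-(d-j)))"
    by (rule zmon_expansion_unique) (use assms in simp_all)
  thus ?thesis using assms by simp
qed

lemma cmod_zcoeff_0: "cmod (zcoeff d c 0) = cmod (zcoeff d c d)"
  using cnj_zcoeff[of d d c] by (metis complex_mod_cnj diff_self_eq_0 order_refl)

lemma bombieri_norm_sq_zcoeff:
  "(bombieri_norm d c)^2 = 2^d * (\<Sum>j\<le>d. (cmod (zcoeff d c j))^2 / real (d choose j))"
proof -
  have "complex_of_real (\<Sum>k\<le>d. (c k)^2 / real (d choose k))
      = bombieri_inner d (\<lambda>k. complex_of_real (c k)) (\<lambda>k. complex_of_real (c k))"
    by (simp add: bombieri_inner_def power2_eq_square)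
  also have "\<dots> = bombieri_inner d (\<lambda>k. \<Sum>j\<le>d. zcoeff d c j * zmon_coeff d j k)
      (\<lambda>k. \<Sum>l\<le>d. zcoeff d c l * zmon_coeff d l k)"
    by (intro bombieri_inner_cong coeff_eq_zmon_expansion)
  also have "\<dots> = (\<Sum>j\<le>d. \<Sum>l\<le>d. zcoeff d c j * cnj (zcoeff d c l) * bombieri_inner d (zmon_coeff d j) (zmon_coeff d l))"
    by (rule bombieri_inner_sum_sum)
  also have "\<dots> = (\<Sum>j\<le>d. zcoeff d c j * cnj (zcoeff d c j) * (2^d / of_nat (d choose j)))"
    by (intro sum.cong refl) (simp add: bombieri_inner_zmon if_distrib cong: if_cong)
  also have "\<dots> = complex_of_real (2^d * (\<Sum>j\<le>d. (cmod (zcoeff d c j))^2 / real (d choose j)))"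
    by (simp add: complex_norm_square[symmetric] sum_distrib_left mult_ac)
  finally have "(\<Sum>k\<le>d. (c k)^2 / real (d choose k)) = 2^d * (\<Sum>j\<le>d. (cmod (zcoeff d c j))^2 / real (d choose j))"
    using of_real_eq_iff by blast
  moreover have "(bombieri_norm d c)^2 = (\<Sum>k\<le>d. (c k)^2 / real (d choose k))"
    unfolding bombieri_norm_def by (rule real_sqrt_pow2) (intro sum_nonneg divide_nonneg_nonneg; simp)
  ultimately show ?thesis by simp
qed

subsection \<open>The uniform norm via points of the unit circle\<close>

definition circle_point :: "real \<Rightarrow> real^2" where "circle_point t = vector [cos t, sin t]"

lemma norm_circle_point: "norm (circle_point t) = 1"
  by (simp add: circle_point_def norm_vec2)

lemma cis_mult_cnj: "cis t * cnj (cis t) = 1"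
  by (simp add: cis_cnj cis_mult)

lemma form_eval_circle_point:
  "complex_of_real (form_eval d c (circle_point t))
    = (\<Sum>j\<le>d. zcoeff d c j * cis t ^ (2*j)) * cnj (cis t) ^ d"
proof -
  define z where "z = cis t"
  have zz: "z * cnj z = 1" by (simp add: z_def cis_mult_cnj)
  have cos: "(z^2 + 1)/2 = z * complex_of_real (cos t)"
  proof -
    have "complex_of_real (cos t) = (z + cnj z)/2" by (simp add: z_def cis.ctr complex_eq_iff)
    thus ?thesis using zz by (simp add: algebra_simps power2_eq_square)
  qed
  have sin: "\<i>*(1 - z^2)/2 = z * complex_of_real (sin t)"
  proof -
    have "complex_of_real (sin t) = \<i>*(cnj z - z)/2" by (simp add: z_def cis.ctr complex_eq_iff)
    hence "z * complex_of_real (sin t) = z * (\<i>*(cnj z - z)/2)" by simp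
    also have "\<dots> = \<i>*(z * cnj z - z*z)/2" by (simp add: algebra_simps)
    finally have "z * complex_of_real (sin t) = \<i>*(z * cnj z - z*z)/2" .
    thus ?thesis using zz by (simp add: power2_eq_square)
  qed
  have "(\<Sum>j\<le>d. zcoeff d c j * (z^2)^j) = poly (zcoeff_poly d c) (z^2)"
    by (simp add: poly_zcoeff_poly_eq_sum)
  also have "\<dots> = (\<Sum>k\<le>d. complex_of_real (c k) * (z * complex_of_real (cos t))^(d-k)
      * (z * complex_of_real (sin t))^k)"
    unfolding poly_zcoeff_poly cos[symmetric] sin[symmetric] by (simp add: add.commute)
  also have "\<dots> = (\<Sum>k\<le>d. z^d * complex_of_real (c k * cos t^(d-k) * sin t^k))"
  proof (intro sum.cong refl)
    fix k assume "k \<in> {..d}"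
    hence "z^d = z^(d-k) * z^k" by (simp add: power_add[symmetric])
    thus "complex_of_real (c k) * (z * complex_of_real (cos t))^(d-k) * (z * complex_of_real (sin t))^k
        = z^d * complex_of_real (c k * cos t^(d-k) * sin t^k)"
      by (simp add: power_mult_distrib mult_ac)
  qed
  also have "\<dots> = z^d * complex_of_real (form_eval d c (circle_point t))"
    by (simp add: form_eval_def circle_point_def sum_distrib_left)
  finally have expand: "(\<Sum>j\<le>d. zcoeff d c j * (z^2)^j) = z^d * complex_of_real (form_eval d c (circle_point t))" .
  have "cnj z ^ d * z^d = 1" using zz by (simp add: power_mult_distrib[symmetric] mult.commute)
  hence "complex_of_real (form_eval d c (circle_point t)) = cnj z ^ d * (\<Sum>j\<le>d. zcoeff d c j * (z^2)^j)"
    by (metis expand mult.assoc mult_1)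
  thus ?thesis unfolding z_def power_mult by (simp only: mult.commute)
qed

lemma form_eval_circle_point_sq:
  "complex_of_real ((form_eval d c (circle_point t))^2)
    = (\<Sum>j\<le>d. \<Sum>l\<le>d. zcoeff d c j * cnj (zcoeff d c l) * (cis (2*t) ^ j * cnj (cis (2*t)) ^ l))"
proof -
  define z where "z = cis t"
  define S where "S = (\<Sum>j\<le>d. zcoeff d c j * z ^ (2*j))"
  have zz: "z * cnj z = 1" by (simp add: z_def cis_mult_cnj)
  have p: "complex_of_real (form_eval d c (circle_point t)) = S * cnj z ^ d"
    by (simp add: form_eval_circle_point S_def z_def)
  have "complex_of_real ((form_eval d c (circle_point t))^2)
      = complex_of_real (form_eval d c (circle_point t)) * cnj (complex_of_real (form_eval d c (circle_point t)))"
    by (simp add: power2_eq_square)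
  also have "\<dots> = S * cnj S * (z * cnj z)^d" by (simp add: p power_mult_distrib mult_ac)
  also have "\<dots> = (\<Sum>j\<le>d. \<Sum>l\<le>d. (zcoeff d c j * z^(2*j)) * (cnj (zcoeff d c l) * cnj z ^ (2*l)))"
    unfolding zz S_def cnj_sum complex_cnj_mult complex_cnj_power by (simp add: sum_product)
  also have "\<dots> = (\<Sum>j\<le>d. \<Sum>l\<le>d. zcoeff d c j * cnj (zcoeff d c l) * (cis (2*t) ^ j * cnj (cis (2*t)) ^ l))"
    by (simp add: z_def power_mult Complex.DeMoivre cis_cnj mult_ac)
  finally show ?thesis .
qed

lemma sum_roots_of_unity_powers:
  assumes d: "d \<ge> 1" and j: "j \<le> d" and l: "l \<le> d"
  shows "(\<Sum>m<d. (cis (2*pi/d) ^ j * cnj (cis (2*pi/d)) ^ l) ^ m)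
       = (if j = l \<or> (j = 0 \<and> l = d) \<or> (j = d \<and> l = 0) then of_nat d else 0)"
proof -
  define r where "r = real j - real l"
  have q: "cis (2*pi/d) ^ j * cnj (cis (2*pi/d)) ^ l = cis (2*pi*r/d)"
  proof -
    have "cis (2*pi/d) ^ j * cnj (cis (2*pi/d)) ^ l = cis (real j * (2*pi/d)) * cis (real l * -(2*pi/d))"
      by (simp add: Complex.DeMoivre cis_cnj)
    also have "\<dots> = cis (2*pi*r/d)" unfolding cis_mult r_def
      by (rule arg_cong[where f=cis]) (use d in \<open>simp add: field_simps\<close>)
    finally show ?thesis .
  qed
  show ?thesis
  proof (cases "j = l \<or> (j = 0 \<and> l = d) \<or> (j = d \<and> l = 0)")
    case True
    hence "r = 0 \<or> r = -d \<or> r = d" by (auto simp: r_def)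
    hence "cis (2*pi*r/d) = 1" using d by (auto simp: cis_cnj[symmetric])
    thus ?thesis using True q by simp
  next
    case False
    have ne: "cis (2*pi*r/d) \<noteq> 1"
    proof
      assume "cis (2*pi*r/d) = 1"
      hence "cos (2*pi*r/d) = 1" by (metis cis.sel(1) one_complex.simps(1))
      then obtain n :: int where n: "2*pi*r/d = n * 2 * pi" by (auto simp: cos_one_2pi_int)
      hence rn: "r = n * d" using d by (simp add: field_simps)
      have "\<bar>r\<bar> \<le> d" using j l by (simp add: r_def)
      hence "\<bar>real_of_int n\<bar> * d \<le> 1 * d" using rn by (simp add: abs_mult)
      hence "\<bar>real_of_int n\<bar> \<le> 1" using d by (simp add: mult_le_cancel_right)
      hence "n = 0 \<or> n = 1 \<or> n = -1" by linarith
      hence "r = 0 \<or> r = d \<or> r = -d" using rn by auto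
      thus False using False j l by (auto simp: r_def)
    qed
    have "cis (2*pi*r/d) ^ d = 1"
      using d cis_multiple_2pi[of r] by (simp add: Complex.DeMoivre r_def)
    thus ?thesis using False q ne by (simp add: sum_gp_strict)
  qed
qed

lemma sum_sum_delta:
  assumes "a \<le> d" "b \<le> d"
  shows "(\<Sum>j\<le>d. \<Sum>l\<le>(d::nat). if j = a \<and> l = b then g j l else 0) = (g a b :: 'a::comm_monoid_add)"
proof -
  have "(\<Sum>j\<le>d. \<Sum>l\<le>(d::nat). if j = a \<and> l = b then g j l else 0) = (\<Sum>j\<le>d. if j = a then g j b else 0)"
    using assms by (intro sum.cong refl) (auto simp: if_distrib cong: if_cong)
  also have "\<dots> = g a b" using assms by simp
  finally show ?thesis .
qed

lemma sum_form_eval_sq_rotations: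
  assumes d: "d \<ge> 1"
  shows "(\<Sum>m<d. complex_of_real ((form_eval d c (circle_point (\<psi> + pi * real m / real d)))^2))
    = of_nat d * ((\<Sum>j\<le>d. zcoeff d c j * cnj (zcoeff d c j))
        + zcoeff d c 0 * cnj (zcoeff d c d) * cnj (cis (2*\<psi>)) ^ d
        + zcoeff d c d * cnj (zcoeff d c 0) * cis (2*\<psi>) ^ d)"
proof -
  define \<zeta> where "\<zeta> = cis (2*pi/d)"
  define T where "T j l = zcoeff d c j * cnj (zcoeff d c l) * (cis (2*\<psi>) ^ j * cnj (cis (2*\<psi>)) ^ l)" for j l
  have rot: "cis (2*(\<psi> + pi * real m / real d)) = cis (2*\<psi>) * \<zeta>^m" for m :: nat
    by (simp add: \<zeta>_def Complex.DeMoivre cis_mult algebra_simps)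
  have "(\<Sum>m<d. complex_of_real ((form_eval d c (circle_point (\<psi> + pi * real m / real d)))^2))
      = (\<Sum>m<d. \<Sum>j\<le>d. \<Sum>l\<le>d. T j l * (\<zeta>^j * cnj \<zeta> ^ l)^m)"
    unfolding form_eval_circle_point_sq rot
    by (intro sum.cong refl) (simp add: T_def power_mult_distrib power_mult[symmetric] mult_ac)
  also have "\<dots> = (\<Sum>j\<le>d. \<Sum>m<d. \<Sum>l\<le>d. T j l * (\<zeta>^j * cnj \<zeta> ^ l)^m)"
    by (rule sum.swap)
  also have "\<dots> = (\<Sum>j\<le>d. \<Sum>l\<le>d. \<Sum>m<d. T j l * (\<zeta>^j * cnj \<zeta> ^ l)^m)"
    by (intro sum.cong refl sum.swap)
  also have "\<dots> = (\<Sum>j\<le>d. \<Sum>l\<le>d. T j l * (if j = l \<or> (j = 0 \<and> l = d) \<or> (j = d \<and> l = 0) then of_nat d else 0))"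
    by (intro sum.cong refl) (simp add: sum_distrib_left[symmetric] sum_roots_of_unity_powers[OF d] \<zeta>_def)
  also have "\<dots> = (\<Sum>j\<le>d. \<Sum>l\<le>d. (if j = l then of_nat d * T j l else 0)
      + (if j = 0 \<and> l = d then of_nat d * T j l else 0) + (if j = d \<and> l = 0 then of_nat d * T j l else 0))"
    using d by (intro sum.cong refl) auto
  also have "\<dots> = of_nat d * ((\<Sum>j\<le>d. T j j) + T 0 d + T d 0)"
    using d by (simp add: sum.distrib sum_distrib_left sum_sum_delta[where g="\<lambda>j l. of_nat d * T j l"] algebra_simps)
  finally show ?thesis
    by (simp add: T_def cis_mult_cnj power_mult_distrib[symmetric] mult_ac)
qed

lemma abs_form_eval_le: "norm x = 1 \<Longrightarrow> \<bar>form_eval d c x\<bar> \<le> (\<Sum>k\<le>d. \<bar>c k\<bar>)"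
proof -
  assume x: "norm x = 1"
  have "\<bar>x$1\<bar> \<le> 1" "\<bar>x$2\<bar> \<le> 1" using component_le_norm_cart[of x] x by auto
  hence "\<bar>(x$1)^(d-k) * (x$2)^k\<bar> \<le> 1" for k by (simp add: abs_mult power_abs power_le_one mult_le_one)
  hence "\<bar>c k * (x$1)^(d-k) * (x$2)^k\<bar> \<le> \<bar>c k\<bar>" for k
    by (simp add: abs_mult mult.assoc mult_left_le)
  hence "(\<Sum>k\<le>d. \<bar>c k * (x$1)^(d-k) * (x$2)^k\<bar>) \<le> (\<Sum>k\<le>d. \<bar>c k\<bar>)" by (rule sum_mono)
  moreover have "\<bar>form_eval d c x\<bar> \<le> (\<Sum>k\<le>d. \<bar>c k * (x$1)^(d-k) * (x$2)^k\<bar>)"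
    unfolding form_eval_def by (rule sum_abs)
  ultimately show ?thesis by linarith
qed

lemma uniform_norm_ge: "norm x = 1 \<Longrightarrow> \<bar>form_eval d c x\<bar> \<le> uniform_norm (form_eval d c)"
  unfolding uniform_norm_def
  by (rule cSup_upper) (auto intro!: bdd_aboveI[where M="\<Sum>k\<le>d. \<bar>c k\<bar>"] abs_form_eval_le)

lemma uniform_norm_nonneg: "0 \<le> uniform_norm (form_eval d c)"
  using uniform_norm_ge[OF norm_circle_point[of 0], of d c] by linarith

lemma uniform_norm_le: "(\<And>x. norm x = 1 \<Longrightarrow> \<bar>p x\<bar> \<le> M) \<Longrightarrow> uniform_norm p \<le> M"
  unfolding uniform_norm_def by (rule cSup_least) (use norm_circle_point in auto)

text \<open>The phase psi is chosen so that both surviving cross terms of the average become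
  |a_d|^2.\<close>

lemma uniform_norm_sq_ge_zcoeff:
  assumes d: "d \<ge> 1"
  shows "(\<Sum>j\<le>d. (cmod (zcoeff d c j))^2) + 2 * (cmod (zcoeff d c d))^2 \<le> (uniform_norm (form_eval d c))^2"
proof -
  define A where "A = zcoeff d c d ^ 2"
  define \<psi> where "\<psi> = - Arg A / (2 * d)"
  have phase: "cis (2*\<psi>) ^ d = cis (- Arg A)" using d by (simp add: Complex.DeMoivre \<psi>_def)
  have a0: "cnj (zcoeff d c 0) = zcoeff d c d" using cnj_zcoeff[of 0 d c] by simp
  have t3: "zcoeff d c d * cnj (zcoeff d c 0) * cis (2*\<psi>) ^ d = complex_of_real ((cmod (zcoeff d c d))^2)"
  proof -
    have "zcoeff d c d * cnj (zcoeff d c 0) * cis (2*\<psi>) ^ d = A * cis (- Arg A)"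
      by (simp add: a0 phase A_def power2_eq_square)
    also have "\<dots> = complex_of_real (cmod A) * (cis (Arg A) * cis (- Arg A))"
      using rcis_cmod_Arg[of A] by (simp add: rcis_def mult.assoc)
    also have "\<dots> = complex_of_real (cmod A)" by (simp add: cis_mult)
    finally show ?thesis by (simp add: A_def norm_power)
  qed
  have t2: "zcoeff d c 0 * cnj (zcoeff d c d) * cnj (cis (2*\<psi>)) ^ d = complex_of_real ((cmod (zcoeff d c d))^2)"
    using arg_cong[where f=cnj, OF t3] by (simp add: mult_ac)
  have t1: "(\<Sum>j\<le>d. zcoeff d c j * cnj (zcoeff d c j)) = complex_of_real (\<Sum>j\<le>d. (cmod (zcoeff d c j))^2)"
    unfolding of_real_sum by (simp add: complex_norm_square del: of_real_power)
  define S where "S = (\<Sum>j\<le>d. (cmod (zcoeff d c j))^2) + 2 * (cmod (zcoeff d c d))^2"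
  have "complex_of_real (\<Sum>m<d. (form_eval d c (circle_point (\<psi> + pi * real m / real d)))^2)
      = complex_of_real (real d * S)"
    using sum_form_eval_sq_rotations[OF d, of c \<psi>] by (simp add: t1 t2 t3 S_def)
  hence "real d * S = (\<Sum>m<d. (form_eval d c (circle_point (\<psi> + pi * real m / real d)))^2)"
    using of_real_eq_iff by metis
  also have "\<dots> \<le> (\<Sum>m<d. (uniform_norm (form_eval d c))^2)"
    by (intro sum_mono) (metis uniform_norm_ge[OF norm_circle_point] abs_ge_zero power2_abs power_mono)
  finally show ?thesis using d by (simp add: S_def)
qed

definition zcoeff_defect :: "nat \<Rightarrow> (nat \<Rightarrow> real) \<Rightarrow> nat \<Rightarrow> real" where
  "zcoeff_defect d c j =
    (if j = 0 \<or> j = d then 0 else (1 - 2 / real (d choose j)) * (cmod (zcoeff d c j))^2)"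

lemma zcoeff_defect_nonneg: "j \<le> d \<Longrightarrow> 0 \<le> zcoeff_defect d c j"
proof (cases "j = 0 \<or> j = d")
  case False
  assume "j \<le> d"
  with False have "0 < j" "j < d" by auto
  hence "d \<le> d choose j" and "2 \<le> d" by (simp_all add: upper_le_binomial)
  hence "2 / real (d choose j) \<le> 1" by (simp add: divide_le_eq)
  thus ?thesis using False by (simp add: zcoeff_defect_def)
qed (simp add: zcoeff_defect_def)

lemma bombieri_norm_sq_add_defect:
  assumes d: "d \<ge> 1"
  shows "(bombieri_norm d c)^2 + 2^(d-1) * (\<Sum>j\<le>d. zcoeff_defect d c j)
    = 2^(d-1) * ((\<Sum>j\<le>d. (cmod (zcoeff d c j))^2) + 2 * (cmod (zcoeff d c d))^2)"
proof -
  define x where "x j = (cmod (zcoeff d c j))^2" for j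
  have "(\<Sum>j\<le>d. x j - 2 * (x j / real (d choose j)))
      = (\<Sum>j\<le>d. zcoeff_defect d c j + ((if j = 0 then - x j else 0) + (if j = d then - x j else 0)))"
    using d by (intro sum.cong refl) (auto simp: zcoeff_defect_def x_def algebra_simps)
  also have "\<dots> = (\<Sum>j\<le>d. zcoeff_defect d c j) - x 0 - x d" by (simp add: sum.distrib)
  finally have "(\<Sum>j\<le>d. x j) + 2 * x d = 2 * (\<Sum>j\<le>d. x j / real (d choose j)) + (\<Sum>j\<le>d. zcoeff_defect d c j)"
    using cmod_zcoeff_0[of d c] by (simp add: x_def sum_subtractf sum_distrib_left)
  moreover have "(2::real)^d = 2^(d-1) * 2" using d by (simp add: power_eq_if)
  ultimately show ?thesis
    by (simp add: bombieri_norm_sq_zcoeff x_def algebra_simps)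
qed

lemma bombieri_norm_sq_le:
  assumes d: "d \<ge> 1"
  shows "(bombieri_norm d c)^2 \<le> 2^(d-1) * (uniform_norm (form_eval d c))^2"
proof -
  have "0 \<le> 2^(d-1) * (\<Sum>j\<le>d. zcoeff_defect d c j)"
    by (intro mult_nonneg_nonneg sum_nonneg zcoeff_defect_nonneg) auto
  moreover have "2^(d-1) * ((\<Sum>j\<le>d. (cmod (zcoeff d c j))^2) + 2 * (cmod (zcoeff d c d))^2)
      \<le> 2^(d-1) * (uniform_norm (form_eval d c))^2"
    using uniform_norm_sq_ge_zcoeff[OF d] by (rule mult_left_mono) simp
  ultimately show ?thesis using bombieri_norm_sq_add_defect[OF d, of c] by linarith
qed

lemma bombieri_norm_pos: "nonzero_form d c \<Longrightarrow> 0 < bombieri_norm d c"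
proof -
  assume "nonzero_form d c"
  then obtain k where k: "k \<le> d" "c k \<noteq> 0" by (auto simp: nonzero_form_def)
  have "0 < (c k)^2 / real (d choose k)" using k by simp
  also have "\<dots> \<le> (\<Sum>k\<le>d. (c k)^2 / real (d choose k))"
    by (rule member_le_sum) (use k in auto)
  finally show ?thesis by (simp add: bombieri_norm_def)
qed

lemma ratio_eq_iff:
  assumes "nonzero_form d c"
  shows "ratio d c = 1 / sqrt (2^(d-1))
    \<longleftrightarrow> 2^(d-1) * (uniform_norm (form_eval d c))^2 = (bombieri_norm d c)^2"
proof -
  define U where "U = uniform_norm (form_eval d c)"
  define B where "B = bombieri_norm d c"
  have B: "0 < B" using bombieri_norm_pos[OF assms] by (simp add: B_def)
  have U: "0 \<le> U" by (simp add: U_def uniform_norm_nonneg)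
  have "U / B = 1 / sqrt (2^(d-1)) \<longleftrightarrow> U * sqrt (2^(d-1)) = B"
    using B by (auto simp: field_simps)
  also have "\<dots> \<longleftrightarrow> (U * sqrt (2^(d-1)))^2 = B^2"
    using U B by (simp add: power2_eq_iff_nonneg)
  finally show ?thesis by (simp add: ratio_def U_def B_def power_mult_distrib mult.commute)
qed

lemma ratio_ge:
  assumes d: "d \<ge> 1" and nz: "nonzero_form d c"
  shows "1 / sqrt (2^(d-1)) \<le> ratio d c"
proof -
  define U where "U = uniform_norm (form_eval d c)"
  define B where "B = bombieri_norm d c"
  have B: "0 < B" using bombieri_norm_pos[OF nz] by (simp add: B_def)
  have "B^2 \<le> (sqrt (2^(d-1)) * U)^2"
    using bombieri_norm_sq_le[OF d, of c] by (simp add: U_def B_def power_mult_distrib)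
  hence "B \<le> sqrt (2^(d-1)) * U"
    by (rule power2_le_imp_le) (simp add: U_def uniform_norm_nonneg)
  thus ?thesis using B by (simp add: ratio_def U_def[symmetric] B_def[symmetric] field_simps)
qed

lemma extremal_imp_defect_eq_0:
  assumes d: "d \<ge> 1" and nz: "nonzero_form d c" and eq: "ratio d c = 1 / sqrt (2^(d-1))"
    and j: "j \<le> d"
  shows "zcoeff_defect d c j = 0"
proof -
  have "2^(d-1) * ((\<Sum>j\<le>d. (cmod (zcoeff d c j))^2) + 2 * (cmod (zcoeff d c d))^2)
      \<le> 2^(d-1) * (uniform_norm (form_eval d c))^2"
    using uniform_norm_sq_ge_zcoeff[OF d] by (rule mult_left_mono) simp
  hence "2^(d-1) * (\<Sum>j\<le>d. zcoeff_defect d c j) \<le> 0"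
    using bombieri_norm_sq_add_defect[OF d, of c] eq ratio_eq_iff[OF nz] by linarith
  hence "(\<Sum>j\<le>d. zcoeff_defect d c j) \<le> 0"
    by (metis mult_le_cancel_left_pos mult_zero_right zero_less_numeral zero_less_power)
  moreover have nonneg: "0 \<le> zcoeff_defect d c i" if "i \<in> {..d}" for i
    using that by (simp add: zcoeff_defect_nonneg)
  ultimately have "(\<Sum>j\<le>d. zcoeff_defect d c j) = 0"
    using sum_nonneg[of "{..d}" "zcoeff_defect d c", OF nonneg] by linarith
  hence "\<forall>i\<in>{..d}. zcoeff_defect d c i = 0"
    using sum_nonneg_eq_0_iff[of "{..d}" "zcoeff_defect d c"] nonneg by blast
  thus ?thesis using j by simp
qed

subsection \<open>The forms Re (W z^d)\<close>

definition complex_of_vec :: "real^2 \<Rightarrow> complex" where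
  "complex_of_vec x = complex_of_real (x$1) + \<i> * complex_of_real (x$2)"

lemma cmod_complex_of_vec: "cmod (complex_of_vec x) = norm x"
  by (simp add: complex_of_vec_def norm_vec2 cmod_def)

lemma complex_of_vec_circle_point: "complex_of_vec (circle_point t) = cis t"
  by (simp add: complex_of_vec_def circle_point_def complex_eq_iff)

lemma complex_of_vec_inject: "complex_of_vec x = complex_of_vec y \<Longrightarrow> x = y"
  by (simp add: complex_of_vec_def complex_eq_iff vec_eq_iff forall_2)

lemma Re_mult_complex_of_vec_power:
  "Re (W * complex_of_vec x ^ d) = form_eval d (\<lambda>k. Re (W * of_nat (d choose k) * \<i>^k)) x"
proof -
  have "complex_of_vec x ^ d = (\<i> * complex_of_real (x$2) + complex_of_real (x$1))^d"
    by (simp add: complex_of_vec_def add.commute)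
  also have "\<dots> = (\<Sum>k\<le>d. of_nat (d choose k) * (\<i> * complex_of_real (x$2))^k * complex_of_real (x$1)^(d-k))"
    by (simp add: binomial_ring atLeast0AtMost)
  finally have "W * complex_of_vec x ^ d
      = (\<Sum>k\<le>d. (W * of_nat (d choose k) * \<i>^k) * complex_of_real ((x$1)^(d-k) * (x$2)^k))"
    by (simp add: sum_distrib_left power_mult_distrib mult_ac)
  moreover have "Re (z * complex_of_real r) = Re z * r" for z r by simp
  ultimately have "Re (W * complex_of_vec x ^ d)
      = (\<Sum>k\<le>d. Re (W * of_nat (d choose k) * \<i>^k) * ((x$1)^(d-k) * (x$2)^k))"
    by (simp only: Re_sum)
  thus ?thesis by (simp add: form_eval_def mult_ac)
qed

lemma Re_mult_i_power_sq: "(Re (W * \<i>^k))^2 = (if even k then (Re W)^2 else (Im W)^2)"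
proof (cases "even k")
  case True
  then obtain m where "k = 2*m" by auto
  thus ?thesis by (cases "even m") (auto simp: power_mult)
next
  case False
  then obtain m where "k = 2*m+1" using oddE by blast
  thus ?thesis by (cases "even m") (auto simp: power_mult)
qed

lemma sum_binomial_parity:
  assumes "d \<ge> 1"
  shows "(\<Sum>k\<le>d. real (d choose k) * (if even k then a else b)) = 2^(d-1) * (a + b)"
proof -
  have e: "2 * (\<Sum>i\<le>d. if even i then real (d choose i) else 0) = 2^d"
    using assms by (intro choose_even_sum) simp
  have o: "2 * (\<Sum>i\<le>d. if odd i then real (d choose i) else 0) = 2^d"
    using assms by (intro choose_odd_sum) simp
  have p: "(2::real)^d = 2 * 2^(d-1)" using assms by (simp add: power_eq_if)
  have "(\<Sum>k\<le>d. real (d choose k) * (if even k then a else b))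
      = a * (\<Sum>i\<le>d. if even i then real (d choose i) else 0) + b * (\<Sum>i\<le>d. if odd i then real (d choose i) else 0)"
    by (simp add: sum_distrib_left sum.distrib[symmetric] if_distrib cong: if_cong) (intro sum.cong; auto)
  also have "\<dots> = 2^(d-1) * (a + b)" using e o p by (simp add: algebra_simps)
  finally show ?thesis .
qed

lemma ratio_Re_power:
  assumes d: "d \<ge> 1" and W: "W \<noteq> 0" and f: "\<And>x. form_eval d c x = Re (W * complex_of_vec x ^ d)"
  shows "ratio d c = 1 / sqrt (2^(d-1))"
proof -
  have ck: "\<forall>k\<le>d. c k = Re (W * of_nat (d choose k) * \<i>^k)"
    by (rule form_eval_eq_imp_coeffs_eq) (simp only: f Re_mult_complex_of_vec_power)
  have "(\<Sum>k\<le>d. (c k)^2 / real (d choose k))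
      = (\<Sum>k\<le>d. real (d choose k) * (if even k then (Re W)^2 else (Im W)^2))"
  proof (intro sum.cong refl)
    fix k assume "k \<in> {..d}"
    hence "c k = real (d choose k) * Re (W * \<i>^k)" using ck by (simp add: algebra_simps)
    thus "(c k)^2 / real (d choose k) = real (d choose k) * (if even k then (Re W)^2 else (Im W)^2)"
      using \<open>k \<in> {..d}\<close> by (simp add: power2_eq_square Re_mult_i_power_sq[symmetric])
  qed
  also have "\<dots> = 2^(d-1) * (cmod W)^2" using d by (simp add: sum_binomial_parity cmod_power2)
  finally have B: "bombieri_norm d c = sqrt (2^(d-1)) * cmod W"
    by (simp add: bombieri_norm_def real_sqrt_mult)
  have "uniform_norm (form_eval d c) \<le> cmod W"
  proof (rule uniform_norm_le)
    fix x :: "real^2" assume "norm x = 1"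
    thus "\<bar>form_eval d c x\<bar> \<le> cmod W"
      using abs_Re_le_cmod[of "W * complex_of_vec x ^ d"]
      by (simp add: f norm_mult norm_power cmod_complex_of_vec)
  qed
  moreover have "cmod W \<le> uniform_norm (form_eval d c)"
  proof -
    define t where "t = - Arg W / d"
    have "cis t ^ d = cis (- Arg W)" using d by (simp add: Complex.DeMoivre t_def)
    hence "W * complex_of_vec (circle_point t) ^ d = complex_of_real (cmod W) * (cis (Arg W) * cis (- Arg W))"
      using rcis_cmod_Arg[of W] by (simp add: complex_of_vec_circle_point rcis_def mult.assoc)
    hence "form_eval d c (circle_point t) = cmod W" by (simp add: f cis_mult)
    thus ?thesis using uniform_norm_ge[OF norm_circle_point, of d c t] by simp
  qed
  ultimately show ?thesis using W by (simp add: ratio_def B)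
qed

lemma form_eval_cheb: "form_eval d (cheb_coeff d) x = Re (complex_of_vec x ^ d)"
proof -
  have "cheb_coeff d k = Re (1 * of_nat (d choose k) * \<i>^k)" for k
  proof (cases "even k")
    case True
    then obtain m where "k = 2*m" by auto
    thus ?thesis by (simp add: cheb_coeff_def power_mult)
  next
    case False
    then obtain m where "k = 2*m+1" using oddE by blast
    thus ?thesis by (simp add: cheb_coeff_def power_mult)
  qed
  hence "form_eval d (cheb_coeff d) x = form_eval d (\<lambda>k. Re (1 * of_nat (d choose k) * \<i>^k)) x"
    by (simp add: form_eval_def)
  thus ?thesis by (simp only: Re_mult_complex_of_vec_power[symmetric]) simp
qed

lemma ratio_cheb: "d \<ge> 1 \<Longrightarrow> ratio d (cheb_coeff d) = 1 / sqrt (2^(d-1))"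
  by (rule ratio_Re_power[where W=1]) (simp_all add: form_eval_cheb)

subsection \<open>The action of CO(2) on Re (W z^d)\<close>

definition rotation :: "real \<Rightarrow> real^2 \<Rightarrow> real^2" where
  "rotation a x = vector [cos a * x$1 - sin a * x$2, sin a * x$1 + cos a * x$2]"

lemma complex_of_vec_rotation: "complex_of_vec (rotation a x) = cis a * complex_of_vec x"
  by (simp add: complex_of_vec_def rotation_def complex_eq_iff)

lemma rotation_rotation_neg: "rotation a (rotation (-a) x) = x"
  by (rule complex_of_vec_inject) (simp add: complex_of_vec_rotation mult.assoc[symmetric] cis_mult)

lemma orthogonal_transformation_rotation: "orthogonal_transformation (rotation a)"
  unfolding orthogonal_transformation
proof (intro conjI allI linearI)
  fix x :: "real^2"
  have "cmod (complex_of_vec (rotation a x)) = cmod (complex_of_vec x)"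
    by (simp add: complex_of_vec_rotation norm_mult)
  thus "norm (rotation a x) = norm x" by (simp only: cmod_complex_of_vec)
next
  fix x y :: "real^2" show "rotation a (x + y) = rotation a x + rotation a y"
    by (simp add: rotation_def vec_eq_iff forall_2 algebra_simps)
next
  fix r and x :: "real^2" show "rotation a (r *\<^sub>R x) = r *\<^sub>R rotation a x"
    by (simp add: rotation_def vec_eq_iff forall_2 algebra_simps)
qed

lemma inv_rotation: "inv (rotation (-a)) = rotation a"
  by (rule inv_equality) (use rotation_rotation_neg[of a] rotation_rotation_neg[of "-a"] in auto)

lemma Re_power_eq_co_action_cheb:
  assumes d: "d \<ge> 1" and W: "W \<noteq> 0"
  shows "\<exists>s \<rho>. in_CO2 s \<rho> \<and> (\<lambda>x. Re (W * complex_of_vec x ^ d)) = co_action s \<rho> (form_eval d (cheb_coeff d))"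
proof -
  define a where "a = Arg W / d"
  have "cis a ^ d = cis (Arg W)" using d by (simp add: Complex.DeMoivre a_def)
  hence W_eq: "complex_of_real (cmod W) * cis a ^ d = W" using rcis_cmod_Arg[of W] by (simp add: rcis_def)
  have "in_CO2 (cmod W) (rotation (-a))" using W by (simp add: in_CO2_def orthogonal_transformation_rotation)
  moreover have "(\<lambda>x. Re (W * complex_of_vec x ^ d)) = co_action (cmod W) (rotation (-a)) (form_eval d (cheb_coeff d))"
  proof
    fix x
    have "co_action (cmod W) (rotation (-a)) (form_eval d (cheb_coeff d)) x
        = Re ((complex_of_real (cmod W) * cis a ^ d) * complex_of_vec x ^ d)"
      by (simp add: co_action_def inv_rotation form_eval_cheb complex_of_vec_rotation power_mult_distrib mult.assoc)
    thus "Re (W * complex_of_vec x ^ d) = co_action (cmod W) (rotation (-a)) (form_eval d (cheb_coeff d)) x"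
      by (simp only: W_eq)
  qed
  ultimately show ?thesis by blast
qed

lemma orthonormal_pair_2:
  fixes p q r t :: real
  assumes "p^2 + q^2 = 1" and "r^2 + t^2 = 1" and "p*r + q*t = 0"
  shows "(r = -q \<and> t = p) \<or> (r = q \<and> t = -p)"
proof -
  define l where "l = t*p - r*q"
  have r: "r = -l*q"
  proof -
    have "r = r*(p^2+q^2)" using assms(1) by simp
    also have "\<dots> = -l*q + p*(p*r+q*t)" by (simp add: l_def algebra_simps power2_eq_square)
    finally show ?thesis using assms(3) by simp
  qed
  have t: "t = l*p"
  proof -
    have "t = t*(p^2+q^2)" using assms(1) by simp
    also have "\<dots> = l*p + q*(p*r+q*t)" by (simp add: l_def algebra_simps power2_eq_square)
    finally show ?thesis using assms(3) by simp
  qed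
  have "l^2 = (r^2+t^2)*(p^2+q^2) - (p*r+q*t)^2" by (simp add: l_def algebra_simps power2_eq_square)
  hence "l = 1 \<or> l = -1" using assms by (simp add: power2_eq_1_iff)
  thus ?thesis using r t by auto
qed

lemma orthogonal_transformation_complex_of_vec:
  assumes "orthogonal_transformation \<sigma>"
  obtains \<zeta> where "\<zeta> \<noteq> 0"
    "(\<forall>x. complex_of_vec (\<sigma> x) = \<zeta> * complex_of_vec x) \<or> (\<forall>x. complex_of_vec (\<sigma> x) = \<zeta> * cnj (complex_of_vec x))"
proof -
  have lin: "linear \<sigma>" and ip: "\<And>v w. \<sigma> v \<bullet> \<sigma> w = v \<bullet> w"
    using assms by (auto simp: orthogonal_transformation_def)
  define e1 :: "real^2" where "e1 = vector [1, 0]"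
  define e2 :: "real^2" where "e2 = vector [0, 1]"
  define u where "u = \<sigma> e1"
  define v where "v = \<sigma> e2"
  have "\<sigma> x = (x$1) *\<^sub>R u + (x$2) *\<^sub>R v" for x
  proof -
    have "x = (x$1) *\<^sub>R e1 + (x$2) *\<^sub>R e2" by (simp add: e1_def e2_def vec_eq_iff forall_2)
    hence "\<sigma> x = \<sigma> ((x$1) *\<^sub>R e1 + (x$2) *\<^sub>R e2)" by (rule arg_cong)
    thus ?thesis by (simp add: linear_add[OF lin] linear_scale[OF lin] u_def v_def)
  qed
  hence \<sigma>_eq: "complex_of_vec (\<sigma> x) = complex_of_real (x$1) * complex_of_vec u + complex_of_real (x$2) * complex_of_vec v" for x
    by (simp add: complex_of_vec_def algebra_simps)
  have inner2: "w \<bullet> w' = w$1 * w'$1 + w$2 * w'$2" for w w' :: "real^2" by (simp add: inner_vec_def sum_2)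
  have uu: "u$1^2 + u$2^2 = 1" using ip[of e1 e1] by (simp add: u_def inner2 e1_def power2_eq_square)
  have vv: "v$1^2 + v$2^2 = 1" using ip[of e2 e2] by (simp add: v_def inner2 e2_def power2_eq_square)
  have uv: "u$1 * v$1 + u$2 * v$2 = 0" using ip[of e1 e2] by (simp add: u_def v_def inner2 e1_def e2_def)
  have \<zeta>: "complex_of_vec u \<noteq> 0" using uu by (auto simp: complex_of_vec_def complex_eq_iff)
  from orthonormal_pair_2[OF uu vv uv] show ?thesis
  proof
    assume "v$1 = - u$2 \<and> v$2 = u$1"
    hence "complex_of_vec v = \<i> * complex_of_vec u" by (simp add: complex_of_vec_def algebra_simps)
    hence "complex_of_vec (\<sigma> x) = complex_of_vec u * complex_of_vec x" for x
      by (simp add: \<sigma>_eq complex_of_vec_def[of x] algebra_simps)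
    thus ?thesis using that \<zeta> by blast
  next
    assume "v$1 = u$2 \<and> v$2 = - u$1"
    hence "complex_of_vec v = - \<i> * complex_of_vec u" by (simp add: complex_of_vec_def algebra_simps)
    hence "complex_of_vec (\<sigma> x) = complex_of_vec u * cnj (complex_of_vec x)" for x
      by (simp add: \<sigma>_eq complex_of_vec_def[of x] algebra_simps)
    thus ?thesis using that \<zeta> by blast
  qed
qed

lemma co_action_cheb_eq_Re_power:
  assumes "in_CO2 s \<rho>"
  obtains W where "W \<noteq> 0" "\<And>x. co_action s \<rho> (form_eval d (cheb_coeff d)) x = Re (W * complex_of_vec x ^ d)"
proof -
  have s: "s > 0" and orth: "orthogonal_transformation \<rho>" using assms by (auto simp: in_CO2_def)
  have f: "co_action s \<rho> (form_eval d (cheb_coeff d)) x = s * Re (complex_of_vec (inv \<rho> x) ^ d)" for x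
    by (simp add: co_action_def form_eval_cheb)
  obtain \<zeta> where \<zeta>: "\<zeta> \<noteq> 0" and
    "(\<forall>x. complex_of_vec (inv \<rho> x) = \<zeta> * complex_of_vec x) \<or> (\<forall>x. complex_of_vec (inv \<rho> x) = \<zeta> * cnj (complex_of_vec x))"
    using orthogonal_transformation_complex_of_vec[OF orthogonal_transformation_inv[OF orth]] by blast
  thus thesis
  proof (elim disjE)
    assume "\<forall>x. complex_of_vec (inv \<rho> x) = \<zeta> * complex_of_vec x"
    hence eq: "co_action s \<rho> (form_eval d (cheb_coeff d)) x = Re ((complex_of_real s * \<zeta>^d) * complex_of_vec x ^ d)" for x
      by (simp add: f power_mult_distrib mult.assoc)
    show thesis using that[of "complex_of_real s * \<zeta>^d", OF _ eq] s \<zeta> by simp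
  next
    assume h: "\<forall>x. complex_of_vec (inv \<rho> x) = \<zeta> * cnj (complex_of_vec x)"
    have eq: "co_action s \<rho> (form_eval d (cheb_coeff d)) x = Re ((complex_of_real s * cnj \<zeta>^d) * complex_of_vec x ^ d)" for x
    proof -
      have "co_action s \<rho> (form_eval d (cheb_coeff d)) x = s * Re (\<zeta>^d * cnj (complex_of_vec x ^ d))"
        by (simp add: f h power_mult_distrib)
      also have "Re (\<zeta>^d * cnj (complex_of_vec x ^ d)) = Re (cnj (\<zeta>^d) * complex_of_vec x ^ d)"
        by (metis cnj.sel(1) complex_cnj_cnj complex_cnj_mult)
      finally show ?thesis by (simp add: algebra_simps)
    qed
    show thesis using that[of "complex_of_real s * cnj \<zeta>^d", OF _ eq] s \<zeta> by simp
  qed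
qed

lemma coeff_eq_Re_top_zcoeff:
  assumes d: "d \<ge> 1" and mid: "\<And>j. 0 < j \<Longrightarrow> j < d \<Longrightarrow> zcoeff d c j = 0" and k: "k \<le> d"
  shows "c k = Re (2 * zcoeff d c d * of_nat (d choose k) * \<i>^k)"
proof -
  have "complex_of_real (c k) = (\<Sum>j\<le>d. zcoeff d c j * zmon_coeff d j k)"
    by (rule coeff_eq_zmon_expansion[OF k])
  also have "\<dots> = (\<Sum>j\<le>d. (if j = 0 then zcoeff d c j * zmon_coeff d j k else 0)
      + (if j = d then zcoeff d c j * zmon_coeff d j k else 0))"
    using d by (intro sum.cong refl) (auto simp: mid)
  also have "\<dots> = zcoeff d c 0 * zmon_coeff d 0 k + zcoeff d c d * zmon_coeff d d k" by (simp add: sum.distrib)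
  also have "\<dots> = cnj (zcoeff d c d * zmon_coeff d d k) + zcoeff d c d * zmon_coeff d d k"
    using cnj_zcoeff[of d d c] cnj_zmon_coeff[of d d k] k by simp
  finally have "c k = 2 * Re (zcoeff d c d * zmon_coeff d d k)" by (simp add: complex_eq_iff)
  thus ?thesis using zmon_coeff_top[OF k] by (simp add: mult.assoc)
qed

lemma form_eval_eq_Re_top_zcoeff:
  assumes d: "d \<ge> 1" and mid: "\<And>j. 0 < j \<Longrightarrow> j < d \<Longrightarrow> zcoeff d c j = 0"
  shows "form_eval d c x = Re (2 * zcoeff d c d * complex_of_vec x ^ d)"
  unfolding Re_mult_complex_of_vec_power form_eval_def
  by (intro sum.cong refl) (simp add: coeff_eq_Re_top_zcoeff[OF d mid])

lemma top_zcoeff_neq_0: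
  assumes d: "d \<ge> 1" and mid: "\<And>j. 0 < j \<Longrightarrow> j < d \<Longrightarrow> zcoeff d c j = 0" and nz: "nonzero_form d c"
  shows "2 * zcoeff d c d \<noteq> 0"
  using nz coeff_eq_Re_top_zcoeff[OF d mid] by (auto simp: nonzero_form_def)

lemma ratio_co_action_cheb:
  assumes d: "d \<ge> 1" and "in_CO2 s \<rho>" and f: "form_eval d c = co_action s \<rho> (form_eval d (cheb_coeff d))"
  shows "ratio d c = 1 / sqrt (2^(d-1))"
proof -
  obtain W where "W \<noteq> 0" "\<And>x. co_action s \<rho> (form_eval d (cheb_coeff d)) x = Re (W * complex_of_vec x ^ d)"
    using co_action_cheb_eq_Re_power[OF assms(2)] by blast
  thus ?thesis using ratio_Re_power[OF d] f by metis
qed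

lemma extremal_iff_co_action_cheb:
  assumes d: "d \<ge> 3" and nz: "nonzero_form d c"
  shows "ratio d c = 1 / sqrt (2^(d-1))
    \<longleftrightarrow> (\<exists>s \<rho>. in_CO2 s \<rho> \<and> form_eval d c = co_action s \<rho> (form_eval d (cheb_coeff d)))"
proof
  assume eq: "ratio d c = 1 / sqrt (2^(d-1))"
  have mid: "zcoeff d c j = 0" if j: "0 < j" "j < d" for j
  proof -
    have "d \<le> d choose j" using j by (rule upper_le_binomial)
    hence "3 \<le> real (d choose j)" using d by linarith
    hence "0 < 1 - 2 / real (d choose j)" by (simp add: divide_less_eq)
    moreover have "zcoeff_defect d c j = 0" using extremal_imp_defect_eq_0[OF _ nz eq] d j by simp
    ultimately show ?thesis using j by (simp add: zcoeff_defect_def)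
  qed
  have "form_eval d c = (\<lambda>x. Re (2 * zcoeff d c d * complex_of_vec x ^ d))"
    using form_eval_eq_Re_top_zcoeff[OF _ mid] d by auto
  thus "\<exists>s \<rho>. in_CO2 s \<rho> \<and> form_eval d c = co_action s \<rho> (form_eval d (cheb_coeff d))"
    using Re_power_eq_co_action_cheb[OF _ top_zcoeff_neq_0[OF _ mid nz]] d by simp
qed (use ratio_co_action_cheb d in auto)

lemma ratio_degree_1:
  assumes "nonzero_form 1 c"
  shows "ratio 1 c = 1"
proof -
  define W where "W = complex_of_real (c 0) - \<i> * complex_of_real (c 1)"
  have "form_eval 1 c x = Re (W * complex_of_vec x ^ 1)" for x
    by (simp add: form_eval_def W_def complex_of_vec_def)
  moreover have "W \<noteq> 0"
    using assms by (auto simp: W_def complex_eq_iff nonzero_form_def le_Suc_eq)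
  ultimately show ?thesis using ratio_Re_power[of 1 W c] by simp
qed

subsection \<open>Degree two\<close>

lemma Im_zcoeff_2_1: "Im (zcoeff 2 c 1) = 0"
  using cnj_zcoeff[of 1 2 c] by (simp add: complex_eq_iff)

lemma form_eval_2_circle_point:
  "form_eval 2 c (circle_point t) = Re (zcoeff 2 c 1) + 2 * Re (zcoeff 2 c 2 * cis (2*t))"
proof -
  define w where "w = cis (2*t)"
  have ww: "w * cnj w = 1" by (simp add: w_def cis_mult_cnj)
  have a0: "zcoeff 2 c 0 = cnj (zcoeff 2 c 2)" using arg_cong[where f=cnj, OF cnj_zcoeff[of 0 2 c]] by simp
  have p1: "cis t ^ 2 = w" by (simp add: w_def Complex.DeMoivre)
  hence p2: "cis t ^ 4 = w^2" by (metis power_mult num_double numeral_times_numeral mult.commute)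
  have p3: "cnj (cis t) ^ 2 = cnj w" using p1 by (metis complex_cnj_power)
  have "complex_of_real (form_eval 2 c (circle_point t))
      = (zcoeff 2 c 0 + zcoeff 2 c 1 * cis t ^ 2 + zcoeff 2 c 2 * cis t ^ 4) * cnj (cis t) ^ 2"
    unfolding form_eval_circle_point sum_atMost_2 by simp
  also have "\<dots> = zcoeff 2 c 0 * cnj w + zcoeff 2 c 1 * (w * cnj w) + zcoeff 2 c 2 * w * (w * cnj w)"
    by (simp only: p1 p2 p3) (simp add: algebra_simps power2_eq_square)
  also have "\<dots> = cnj (zcoeff 2 c 2 * w) + zcoeff 2 c 1 + zcoeff 2 c 2 * w" by (simp add: ww a0)
  finally have "form_eval 2 c (circle_point t) = Re (cnj (zcoeff 2 c 2 * w) + zcoeff 2 c 1 + zcoeff 2 c 2 * w)"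
    by (metis Re_complex_of_real)
  thus ?thesis by (simp add: w_def)
qed

lemma uniform_norm_2_ge:
  "\<bar>Re (zcoeff 2 c 1)\<bar> + 2 * cmod (zcoeff 2 c 2) \<le> uniform_norm (form_eval 2 c)"
proof -
  define a where "a = zcoeff 2 c 2"
  define r where "r = Re (zcoeff 2 c 1)"
  define \<phi> where "\<phi> = (if 0 \<le> r then 0 else pi)"
  define t where "t = (\<phi> - Arg a) / 2"
  have "2*t = \<phi> - Arg a" by (simp add: t_def)
  hence "a * cis (2*t) = complex_of_real (cmod a) * (cis (Arg a) * cis (\<phi> - Arg a))"
    using rcis_cmod_Arg[of a] by (simp add: rcis_def mult.assoc)
  hence "Re (a * cis (2*t)) = cmod a * cos \<phi>" by (simp add: cis_mult)
  hence "form_eval 2 c (circle_point t) = r + 2 * (cmod a * cos \<phi>)"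
    by (simp add: form_eval_2_circle_point a_def r_def)
  moreover have "0 \<le> cmod a" by simp
  ultimately have "\<bar>r\<bar> + 2 * cmod a = \<bar>form_eval 2 c (circle_point t)\<bar>"
    by (cases "0 \<le> r"; simp add: \<phi>_def; arith)
  also have "\<dots> \<le> uniform_norm (form_eval 2 c)" by (rule uniform_norm_ge[OF norm_circle_point])
  finally show ?thesis by (simp add: a_def r_def)
qed

text \<open>Here d choose 1 = 2, so the defect vanishes identically and carries no information; the
  lower bound above instead shows that a_1 and a_2 cannot both be nonzero.\<close>

lemma extremal_2_cases:
  assumes nz: "nonzero_form 2 c" and eq: "ratio 2 c = 1 / sqrt 2"
  shows "Re (zcoeff 2 c 1) = 0 \<or> zcoeff 2 c 2 = 0"
proof -
  define U where "U = uniform_norm (form_eval 2 c)"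
  define r where "r = Re (zcoeff 2 c 1)"
  define m where "m = cmod (zcoeff 2 c 2)"
  have a1: "zcoeff 2 c 1 = complex_of_real r" using Im_zcoeff_2_1[of c] by (simp add: r_def complex_eq_iff)
  have "(\<Sum>j\<le>(2::nat). zcoeff_defect 2 c j) = 0" by (simp add: sum_atMost_2 zcoeff_defect_def)
  moreover have "(cmod (zcoeff 2 c 1))^2 = r^2" using a1 by simp
  ultimately have "U^2 = r^2 + 4 * m^2"
    using bombieri_norm_sq_add_defect[of 2 c] ratio_eq_iff[OF nz] eq cmod_zcoeff_0[of 2 c]
    by (simp add: U_def m_def sum_atMost_2)
  moreover have "\<bar>r\<bar> + 2 * m \<le> U" using uniform_norm_2_ge[of c] by (simp add: U_def r_def m_def)
  hence "(\<bar>r\<bar> + 2 * m)^2 \<le> U^2" by (rule power_mono) (simp add: m_def)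
  ultimately have "\<bar>r\<bar> * m \<le> 0" by (simp add: power2_eq_square algebra_simps)
  hence "r = 0 \<or> m = 0" by (auto simp: m_def mult_le_0_iff)
  thus ?thesis by (auto simp: r_def m_def)
qed

lemma ratio_circle_form:
  assumes e: "e \<noteq> 0" and f: "\<And>x. form_eval 2 c x = e * ((x$1)^2 + (x$2)^2)"
  shows "ratio 2 c = 1 / sqrt 2"
proof -
  have "\<forall>k\<le>2. c k = (if k = 1 then 0 else e)"
    by (rule form_eval_eq_imp_coeffs_eq)
      (simp only: f, simp add: form_eval_def sum_atMost_2 algebra_simps power2_eq_square)
  hence c: "c 0 = e" "c (Suc 0) = 0" "c 2 = e" by simp_all
  have "(\<Sum>k\<le>2. (c k)^2 / real (2 choose k)) = 2 * e^2"
    by (simp add: numeral_2_eq_2 c[unfolded numeral_2_eq_2])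
  hence "bombieri_norm 2 c = sqrt 2 * \<bar>e\<bar>" by (simp add: bombieri_norm_def real_sqrt_mult)
  moreover have "uniform_norm (form_eval 2 c) \<le> \<bar>e\<bar>"
    by (rule uniform_norm_le) (simp add: f norm_vec2 abs_mult)
  moreover have "\<bar>e\<bar> \<le> uniform_norm (form_eval 2 c)"
    using uniform_norm_ge[OF norm_circle_point, of 2 c 0] by (simp add: f circle_point_def)
  ultimately show ?thesis using e by (simp add: ratio_def)
qed

lemma form_eval_2_eq_circle_form:
  assumes "zcoeff 2 c 2 = 0"
  shows "form_eval 2 c = (\<lambda>x. Re (zcoeff 2 c 1) * ((x$1)^2 + (x$2)^2))"
proof -
  have a0: "zcoeff 2 c 0 = 0" using cnj_zcoeff[of 0 2 c] assms by simp
  have expand: "complex_of_real (c k) = zcoeff 2 c 1 * zmon_coeff 2 1 k" if "k \<le> 2" for k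
    using coeff_eq_zmon_expansion[OF that, of c] by (simp add: sum_atMost_2 a0 assms)
  have "zmon_coeff 2 1 0 = 1" "zmon_coeff 2 1 1 = 0" "zmon_coeff 2 1 2 = 1"
    by (simp_all add: zmon_coeff_def zmon_poly_def numeral_2_eq_2)
  hence "complex_of_real (c 0) = zcoeff 2 c 1" "complex_of_real (c 1) = 0"
      "complex_of_real (c 2) = zcoeff 2 c 1"
    using expand[of 0] expand[of 1] expand[of 2] by simp_all
  hence "c 0 = Re (zcoeff 2 c 1)" "c 1 = 0" "c 2 = Re (zcoeff 2 c 1)"
    by (simp_all add: complex_eq_iff)
  thus ?thesis by (simp add: form_eval_def sum_atMost_2 fun_eq_iff algebra_simps)
qed

lemma form_eval_cheb_2: "form_eval 2 (cheb_coeff 2) = (\<lambda>x. (x$1)^2 - (x$2)^2)"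
  by (simp add: fun_eq_iff form_eval_def cheb_coeff_def sum_atMost_2)

lemma co_action_circle_form:
  assumes "in_CO2 s \<rho>"
  shows "co_action s \<rho> (\<lambda>x. (x$1)^2 + (x$2)^2) = (\<lambda>x. s * ((x$1)^2 + (x$2)^2))"
proof -
  have "orthogonal_transformation (inv \<rho>)"
    using assms orthogonal_transformation_inv by (auto simp: in_CO2_def)
  hence "norm (inv \<rho> x) = norm x" for x by (rule orthogonal_transformation_norm)
  hence "(inv \<rho> x $ 1)^2 + (inv \<rho> x $ 2)^2 = (x$1)^2 + (x$2)^2" for x
    by (metis norm_vec2 real_sqrt_eq_iff)
  thus ?thesis by (simp add: co_action_def)
qed

lemma co_action_id: "co_action s id p = (\<lambda>x. s * p x)"
  by (simp add: co_action_def inv_id)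

lemma extremal_2_iff:
  assumes nz: "nonzero_form 2 c"
  shows "ratio 2 c = 1 / sqrt 2 \<longleftrightarrow>
          (\<exists>s \<rho>. in_CO2 s \<rho> \<and>
             (form_eval 2 c = co_action s \<rho> (\<lambda>x. (x$1)^2 + (x$2)^2)
              \<or> form_eval 2 c = (\<lambda>x. - co_action s \<rho> (\<lambda>x. (x$1)^2 + (x$2)^2) x)
              \<or> form_eval 2 c = co_action s \<rho> (\<lambda>x. (x$1)^2 - (x$2)^2)))"
    (is "_ \<longleftrightarrow> (\<exists>s \<rho>. in_CO2 s \<rho> \<and> ?orbit s \<rho>)")
proof
  assume "ratio 2 c = 1 / sqrt 2"
  from extremal_2_cases[OF nz this] show "\<exists>s \<rho>. in_CO2 s \<rho> \<and> ?orbit s \<rho>"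
  proof
    assume "Re (zcoeff 2 c 1) = 0"
    hence "zcoeff 2 c 1 = 0" using Im_zcoeff_2_1[of c] by (simp add: complex_eq_iff)
    hence mid: "zcoeff 2 c j = 0" if "0 < j" "j < 2" for j
      using that by (simp add: less_2_cases_iff)
    have "form_eval 2 c = (\<lambda>x. Re (2 * zcoeff 2 c 2 * complex_of_vec x ^ 2))"
      using form_eval_eq_Re_top_zcoeff[of 2 c, OF _ mid] by auto
    moreover obtain s \<rho> where "in_CO2 s \<rho>"
      "(\<lambda>x. Re (2 * zcoeff 2 c 2 * complex_of_vec x ^ 2)) = co_action s \<rho> (form_eval 2 (cheb_coeff 2))"
      using Re_power_eq_co_action_cheb[of 2, OF _ top_zcoeff_neq_0[of 2 c, OF _ mid nz]] by auto
    ultimately show ?thesis using form_eval_cheb_2 by metis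
  next
    assume a2: "zcoeff 2 c 2 = 0"
    define r where "r = Re (zcoeff 2 c 1)"
    have f: "form_eval 2 c = (\<lambda>x. r * ((x$1)^2 + (x$2)^2))"
      unfolding r_def by (rule form_eval_2_eq_circle_form[OF a2])
    have "r \<noteq> 0"
    proof
      assume "r = 0"
      hence "\<forall>k\<le>2. c k = 0"
        using form_eval_eq_imp_coeffs_eq[of 2 c "\<lambda>_. 0"] f by (simp add: form_eval_def)
      thus False using nz by (auto simp: nonzero_form_def)
    qed
    have "in_CO2 \<bar>r\<bar> id" using \<open>r \<noteq> 0\<close> by (simp add: in_CO2_def id_def)
    moreover have "?orbit \<bar>r\<bar> id" by (cases "r > 0") (auto simp: f co_action_id fun_eq_iff)
    ultimately show ?thesis by blast
  qed
next
  assume "\<exists>s \<rho>. in_CO2 s \<rho> \<and> ?orbit s \<rho>"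
  then obtain s \<rho> where co: "in_CO2 s \<rho>" and "?orbit s \<rho>" by blast
  have "s > 0" using co by (simp add: in_CO2_def)
  from \<open>?orbit s \<rho>\<close> show "ratio 2 c = 1 / sqrt 2"
  proof (elim disjE)
    assume "form_eval 2 c = co_action s \<rho> (\<lambda>x. (x$1)^2 + (x$2)^2)"
    thus ?thesis using ratio_circle_form[of s c] \<open>s > 0\<close> by (simp add: co_action_circle_form[OF co])
  next
    assume "form_eval 2 c = (\<lambda>x. - co_action s \<rho> (\<lambda>x. (x$1)^2 + (x$2)^2) x)"
    thus ?thesis using ratio_circle_form[of "-s" c] \<open>s > 0\<close> by (simp add: co_action_circle_form[OF co])
  next
    assume "form_eval 2 c = co_action s \<rho> (\<lambda>x. (x$1)^2 - (x$2)^2)"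
    thus ?thesis using ratio_co_action_cheb[OF _ co, of 2 c] by (simp add: form_eval_cheb_2)
  qed
qed

theorem theorem1p1:
  fixes d :: nat and c :: "nat \<Rightarrow> real"
  assumes "d \<ge> 1" and "nonzero_form d c"
  shows "ratio d c \<ge> ratio d (cheb_coeff d)
    \<and> ratio d (cheb_coeff d) = 1 / sqrt (2 ^ (d - 1))
    \<and> (d = 1 \<longrightarrow> ratio d c = ratio d (cheb_coeff d))
    \<and> (d = 2 \<longrightarrow> (ratio d c = ratio d (cheb_coeff d) \<longleftrightarrow>
          (\<exists>s \<rho>. in_CO2 s \<rho> \<and>
             (form_eval d c = co_action s \<rho> (\<lambda>x. (x$1)^2 + (x$2)^2)
              \<or> form_eval d c = (\<lambda>x. - co_action s \<rho> (\<lambda>x. (x$1)^2 + (x$2)^2) x)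
              \<or> form_eval d c = co_action s \<rho> (\<lambda>x. (x$1)^2 - (x$2)^2)))))
    \<and> (d \<ge> 3 \<longrightarrow> (ratio d c = ratio d (cheb_coeff d) \<longleftrightarrow>
          (\<exists>s \<rho>. in_CO2 s \<rho> \<and> form_eval d c = co_action s \<rho> (form_eval d (cheb_coeff d)))))"
proof (intro conjI impI)
  show cheb: "ratio d (cheb_coeff d) = 1 / sqrt (2 ^ (d - 1))" by (rule ratio_cheb[OF assms(1)])
  show "ratio d c \<ge> ratio d (cheb_coeff d)" unfolding cheb by (rule ratio_ge[OF assms])
  show "ratio d c = ratio d (cheb_coeff d)" if "d = 1"
    using ratio_degree_1 assms(2) cheb that by simp
  show "ratio d c = ratio d (cheb_coeff d) \<longleftrightarrow> (\<exists>s \<rho>. in_CO2 s \<rho> \<and>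
             (form_eval d c = co_action s \<rho> (\<lambda>x. (x$1)^2 + (x$2)^2)
              \<or> form_eval d c = (\<lambda>x. - co_action s \<rho> (\<lambda>x. (x$1)^2 + (x$2)^2) x)
              \<or> form_eval d c = co_action s \<rho> (\<lambda>x. (x$1)^2 - (x$2)^2)))" if "d = 2"
    using extremal_2_iff assms(2) cheb that by simp
  show "ratio d c = ratio d (cheb_coeff d) \<longleftrightarrow>
          (\<exists>s \<rho>. in_CO2 s \<rho> \<and> form_eval d c = co_action s \<rho> (form_eval d (cheb_coeff d)))" if "d \<ge> 3"
    using extremal_iff_co_action_cheb[OF that assms(2)] cheb by simp
qed

end
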